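(* Let $\Gamma$ be a temporal language preserved by a constant operation, by $-$, and by $\mathrm{cyc}$. If $\Gamma$ does not pp-define $S=\{(x,y,z)\in\mathbb{Q}^3\mid (x=y=z)\vee(x\neq y\wedge x\neq z\wedge z\neq y)\}$, then $\Gamma$ is preserved by $\mathrm{su}_1$, $\mathrm{peak}$, $\mathrm{ci}$, $\mathrm{ic}$, or by all permutations of $\mathbb{Q}$.
   Context: A temporal language is a relational structure with domain $\mathbb{Q}$ and finite signature whose relations are first-order definable in $(\mathbb{Q};<)$. $\Gamma$ pp-defines $R$ if $R$ is definable by a primitive positive formula over the signature of $\Gamma$. An operation preserves $\Gamma$ if, applied componentwise, it maps tuples of each relation of $\Gamma$ to a tuple of that relation. $-(x)=-x$. $\mathrm{su}_1(x)=0$ for $x<0$, $1$ for $x\ge0$. $\mathrm{peak}(x)=-1$ for $x\ne0$, $1$ for $x=0$. $\mathrm{ic}(x)=x$ for $x<0$, $0$ for $x\ge0$; $\mathrm{ci}(x)=0$ for $x<0$, $x$ for $x\ge0$. $\mathrm{cyc}(x)=e(x)$ for $x<\pi$ and $e^{-1}(x)$ for $x>\pi$, where $e$ is an order-preserving bijection between $(-\infty,\pi)\cap\mathbb{Q}$ and $(\pi,\infty)\cap\mathbb{Q}$. *)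

theory Defs
  imports Complex_Main
begin

datatype lt_fo = FLt nat nat | FEq nat nat | FNeg lt_fo | FConj lt_fo lt_fo | FExists nat lt_fo

fun lt_sat :: "lt_fo \<Rightarrow> (nat \<Rightarrow> rat) \<Rightarrow> bool" where
  "lt_sat (FLt i j) s = (s i < s j)"
| "lt_sat (FEq i j) s = (s i = s j)"
| "lt_sat (FNeg \<phi>) s = (\<not> lt_sat \<phi> s)"
| "lt_sat (FConj \<phi> \<psi>) s = (lt_sat \<phi> s \<and> lt_sat \<psi> s)"
| "lt_sat (FExists i \<phi>) s = (\<exists>a. lt_sat \<phi> (s(i := a)))"

definition fo_definable_lt :: "nat \<Rightarrow> rat list set \<Rightarrow> bool" where
  "fo_definable_lt n R \<longleftrightarrow> (\<exists>\<phi>. \<forall>s. lt_sat \<phi> s \<longleftrightarrow> map s [0..<n] \<in> R)"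

text \<open>A tstructure with domain Q and finite signature: a finite list of relations,
  each given with its arity.\<close>
type_synonym tstructure = "(nat \<times> rat list set) list"

definition temporal_language :: "tstructure \<Rightarrow> bool" where
  "temporal_language \<Gamma> \<longleftrightarrow>
     (\<forall>(n, R) \<in> set \<Gamma>. R \<subseteq> {t. length t = n} \<and> fo_definable_lt n R)"

datatype pp_fo = PTrue | PAtom nat "nat list" | PEq nat nat | PConj pp_fo pp_fo | PExists nat pp_fo

fun pp_sat :: "tstructure \<Rightarrow> pp_fo \<Rightarrow> (nat \<Rightarrow> rat) \<Rightarrow> bool" where
  "pp_sat \<Gamma> PTrue s = True"
| "pp_sat \<Gamma> (PAtom k vs) s =
     (k < length \<Gamma> \<and> length vs = fst (\<Gamma> ! k) \<and> map s vs \<in> snd (\<Gamma> ! k))"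
| "pp_sat \<Gamma> (PEq i j) s = (s i = s j)"
| "pp_sat \<Gamma> (PConj \<phi> \<psi>) s = (pp_sat \<Gamma> \<phi> s \<and> pp_sat \<Gamma> \<psi> s)"
| "pp_sat \<Gamma> (PExists i \<phi>) s = (\<exists>a. pp_sat \<Gamma> \<phi> (s(i := a)))"

definition pp_defines :: "tstructure \<Rightarrow> nat \<Rightarrow> rat list set \<Rightarrow> bool" where
  "pp_defines \<Gamma> n R \<longleftrightarrow> (\<exists>\<phi>. \<forall>s. pp_sat \<Gamma> \<phi> s \<longleftrightarrow> map s [0..<n] \<in> R)"

definition preserves :: "(rat \<Rightarrow> rat) \<Rightarrow> tstructure \<Rightarrow> bool" where
  "preserves f \<Gamma> \<longleftrightarrow> (\<forall>(n, R) \<in> set \<Gamma>. \<forall>t \<in> R. map f t \<in> R)"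

definition S_rel :: "rat list set" where
  "S_rel = {[x, y, z] | x y z. (x = y \<and> y = z) \<or> (x \<noteq> y \<and> x \<noteq> z \<and> z \<noteq> y)}"

definition su1 :: "rat \<Rightarrow> rat" where
  "su1 x = (if x < 0 then 0 else 1)"

definition peak :: "rat \<Rightarrow> rat" where
  "peak x = (if x \<noteq> 0 then -1 else 1)"

definition ic :: "rat \<Rightarrow> rat" where
  "ic x = (if x < 0 then x else 0)"

definition ci :: "rat \<Rightarrow> rat" where
  "ci x = (if x < 0 then 0 else x)"

definition below_pi :: "rat set" where
  "below_pi = {x. real_of_rat x < pi}"

definition above_pi :: "rat set" where
  "above_pi = {x. pi < real_of_rat x}"

definition cyc_witness :: "(rat \<Rightarrow> rat) \<Rightarrow> bool" where
  "cyc_witness e \<longleftrightarrow> strict_mono_on below_pi e \<and> bij_betw e below_pi above_pi"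

definition cyc :: "(rat \<Rightarrow> rat) \<Rightarrow> rat \<Rightarrow> rat" where
  "cyc e x = (if real_of_rat x < pi then e x else the_inv_into below_pi e x)"

end

(*
  Automorphisms of (Q; <) preserve every temporal language, and composing them with cyc, which
  exchanges the two halves of Q cut at pi while keeping each half in order, realises every cyclic
  shift of a finite sorted set. With - added, this maps any injective triple onto any other, and
  any finite set onto any other of the same size with a prescribed point going to a prescribed
  point.

  Let X be finite and a, b, c distinct in X. The images (h a, h b, h c) of partial endomorphisms
  h of Gamma on X form a pp-definable relation R (the canonical query of X); it contains all
  constant and all injective triples. If no h identified a and b but not c, R together with its
  two cyclic rotations would define S. Iterating such collapses, every finite set with at least
  two elements is mapped onto two points. Collapsing 2k + 2 points leaves a fibre with k + 1
  points and a second value; sending the entry 0 of a tuple to the second value and its k other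
  entries into the fibre, and then the two values to 1 and -1, realises peak on the tuple.
  So, under the hypotheses, peak is in fact always a polymorphism.
*)
theory Submission
  imports Defs
begin

section \<open>Automorphisms of (Q; <)\<close>

lemma strict_mono_surj_fixing_below:
  fixes b p q :: rat
  assumes "b < p" and "b < q"
  shows "\<exists>h. strict_mono h \<and> surj h \<and> (\<forall>z\<le>b. h z = z) \<and> h p = q"
proof -
  define c where "c = (q - b) / (p - b)"
  have "c > 0" using assms by (simp add: c_def)
  define h where "h z = (if z \<le> b then z else b + (z - b) * c)" for z
  have "strict_mono h"
  proof (rule strict_monoI)
    fix x y :: rat assume "x < y"
    show "h x < h y"
    proof (cases "y \<le> b")
      case False
      then have "b < b + (y - b) * c" using \<open>c > 0\<close> by simp
      then show ?thesis using \<open>x < y\<close> \<open>c > 0\<close> by (auto simp: h_def)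
    qed (use \<open>x < y\<close> in \<open>simp add: h_def\<close>)
  qed
  moreover have "surj h"
  proof -
    have "h (if w \<le> b then w else b + (w - b) / c) = w" for w
    proof (cases "w \<le> b")
      case False
      then have "0 < (w - b) / c" using \<open>c > 0\<close> by simp
      then show ?thesis using \<open>c > 0\<close> by (simp add: h_def)
    qed (simp add: h_def)
    then show ?thesis by (rule surjI)
  qed
  moreover have "h p = q" using assms by (simp add: h_def c_def)
  ultimately show ?thesis by (auto simp: h_def)
qed

lemma strict_mono_surj_extends_sorted:
  fixes xs ys :: "rat list"
  assumes "sorted_wrt (<) xs" and "sorted_wrt (<) ys" and "length xs = length ys"
  shows "\<exists>f. strict_mono f \<and> surj f \<and> map f xs = ys"
  using assms
proof (induction xs arbitrary: ys rule: rev_induct)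
  case Nil
  then show ?case by (intro exI[of _ id]) (simp add: strict_mono_def)
next
  case (snoc x xs)
  obtain ys' y where ys: "ys = ys' @ [y]"
    using snoc.prems(3) by (cases ys rule: rev_cases) auto
  have "sorted_wrt (<) xs" "sorted_wrt (<) ys'" "length xs = length ys'"
    using snoc.prems ys by (auto simp: sorted_wrt_append)
  then obtain f0 where f0: "strict_mono f0" "surj f0" "map f0 xs = ys'"
    using snoc.IH by blast
  have below: "u < f0 x \<and> u < y" if "u \<in> set ys'" for u
    using that f0 snoc.prems ys by (auto simp: sorted_wrt_append strict_mono_less)
  define b where "b = Max (insert (min (f0 x) y - 1) (set ys'))"
  have "b < f0 x" "b < y" using below by (auto simp: b_def)
  then obtain h where h: "strict_mono h" "surj h" "\<forall>z\<le>b. h z = z" "h (f0 x) = y"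
    using strict_mono_surj_fixing_below by blast
  have "f0 z \<le> b" if "z \<in> set xs" for z
    using that f0(3) by (auto simp: b_def)
  then have "map (h \<circ> f0) (xs @ [x]) = ys"
    using f0(3) h(3,4) ys by auto
  moreover have "strict_mono (h \<circ> f0)"
    using h(1) f0(1) by (simp add: strict_mono_def)
  moreover have "surj (h \<circ> f0)"
    using comp_surj[OF f0(2) h(2)] .
  ultimately show ?case by blast
qed

lemma lt_sat_comp_automorphism:
  assumes "strict_mono f" and "surj f"
  shows "lt_sat \<phi> (f \<circ> s) \<longleftrightarrow> lt_sat \<phi> s"
proof (induction \<phi> arbitrary: s)
  case (FExists i \<phi>)
  have upd: "(f \<circ> s)(i := f a) = f \<circ> s(i := a)" for a by auto
  have "(\<exists>b. lt_sat \<phi> ((f \<circ> s)(i := b))) \<longleftrightarrow> (\<exists>a. lt_sat \<phi> ((f \<circ> s)(i := f a)))"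
    using \<open>surj f\<close> by (metis surjD)
  also have "\<dots> \<longleftrightarrow> (\<exists>a. lt_sat \<phi> (s(i := a)))"
    by (simp only: upd FExists.IH)
  finally show ?case by (simp only: lt_sat.simps)
qed (use assms in \<open>auto simp: strict_mono_less strict_mono_eq\<close>)

lemma temporal_language_arity:
  "temporal_language \<Gamma> \<Longrightarrow> (n, R) \<in> set \<Gamma> \<Longrightarrow> t \<in> R \<Longrightarrow> length t = n"
  unfolding temporal_language_def by blast

lemma preserves_automorphism:
  assumes "temporal_language \<Gamma>" and "strict_mono f" and "surj f"
  shows "preserves f \<Gamma>"
  unfolding preserves_def
proof clarify
  fix n R t assume "(n, R) \<in> set \<Gamma>" and "t \<in> R"
  then have "length t = n" and "fo_definable_lt n R"
    using assms(1) unfolding temporal_language_def by auto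
  then obtain \<phi> where \<phi>: "\<And>s. lt_sat \<phi> s \<longleftrightarrow> map s [0..<n] \<in> R"
    unfolding fo_definable_lt_def by blast
  have t: "map (\<lambda>i. t ! i) [0..<n] = t"
    using \<open>length t = n\<close> map_nth by blast
  have "lt_sat \<phi> (f \<circ> (\<lambda>i. t ! i))"
    using \<phi> t \<open>t \<in> R\<close> lt_sat_comp_automorphism[OF assms(2,3)] by simp
  then show "map f t \<in> R"
    using \<phi> t by (metis map_map)
qed

lemma preserves_comp: "preserves f \<Gamma> \<Longrightarrow> preserves g \<Gamma> \<Longrightarrow> preserves (f \<circ> g) \<Gamma>"
  unfolding preserves_def by fastforce

lemma preserves_id: "preserves id \<Gamma>"
  by (simp add: preserves_def)

lemma preserves_all_consts:
  assumes "temporal_language \<Gamma>" and "preserves (\<lambda>_. c) \<Gamma>"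
  shows "preserves (\<lambda>_. a) \<Gamma>"
proof -
  obtain f where f: "strict_mono f" "surj f" and "map f [c] = [a]"
    using strict_mono_surj_extends_sorted[of "[c]" "[a]"] by auto
  have "preserves (f \<circ> (\<lambda>_. c)) \<Gamma>"
    using preserves_comp[OF preserves_automorphism[OF assms(1) f] assms(2)] .
  moreover have "f \<circ> (\<lambda>_::rat. c) = (\<lambda>_. a)"
    using \<open>map f [c] = [a]\<close> by auto
  ultimately show ?thesis by (simp only:)
qed

section \<open>Cyclic shifts by cyc\<close>

lemma cyc_below_pi:
  assumes "cyc_witness e" and "x \<in> below_pi"
  shows "cyc e x = e x" and "cyc e x \<in> above_pi"
  using assms by (auto simp: cyc_def below_pi_def cyc_witness_def bij_betw_def)

lemma cyc_above_pi:
  assumes "cyc_witness e" and "y \<in> above_pi"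
  shows "cyc e y \<in> below_pi" and "e (cyc e y) = y"
proof -
  have "cyc e y = the_inv_into below_pi e y"
    using \<open>y \<in> above_pi\<close> by (simp add: cyc_def above_pi_def)
  then show "cyc e y \<in> below_pi" and "e (cyc e y) = y"
    using assms bij_betw_the_inv_into f_the_inv_into_f_bij_betw
    by (fastforce simp: cyc_witness_def bij_betw_def)+
qed

lemma strict_mono_on_cyc_below_pi: "cyc_witness e \<Longrightarrow> strict_mono_on below_pi (cyc e)"
  by (auto simp: strict_mono_on_def cyc_below_pi(1) cyc_witness_def)

lemma strict_mono_on_cyc_above_pi:
  assumes "cyc_witness e"
  shows "strict_mono_on above_pi (cyc e)"
proof (rule strict_mono_onI)
  fix x y assume "x \<in> above_pi" "y \<in> above_pi" "x < y"
  then show "cyc e x < cyc e y"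
    using assms cyc_above_pi[OF assms] strict_mono_on_less[of below_pi e "cyc e x" "cyc e y"]
    by (auto simp: cyc_witness_def)
qed

lemma below_pi_less_above_pi:
  assumes "x \<in> below_pi" and "y \<in> above_pi"
  shows "x < y"
proof -
  have "real_of_rat x < real_of_rat y"
    using assms unfolding below_pi_def above_pi_def by simp
  then show ?thesis by (simp add: of_rat_less)
qed

lemma automorphism_splitting_at_pi:
  fixes as bs :: "rat list"
  assumes "sorted_wrt (<) (as @ bs)"
  shows "\<exists>f. strict_mono f \<and> surj f \<and> f ` set as \<subseteq> below_pi \<and> f ` set bs \<subseteq> above_pi"
proof -
  define ls :: "rat list" where "ls = map (\<lambda>i. of_nat i - of_nat (length as)) [0..<length as]"
  define hs :: "rat list" where "hs = map (\<lambda>i. 4 + of_nat i) [0..<length bs]"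
  have "set ls \<subseteq> below_pi"
  proof
    fix x assume "x \<in> set ls"
    then have "real_of_rat x < 0" by (auto simp: ls_def)
    then show "x \<in> below_pi" using pi_gt_zero unfolding below_pi_def mem_Collect_eq by linarith
  qed
  moreover have "set hs \<subseteq> above_pi"
  proof
    fix x assume "x \<in> set hs"
    then have "4 \<le> real_of_rat x"
      by (auto simp: hs_def of_rat_add)
    then show "x \<in> above_pi" using pi_less_4 unfolding above_pi_def mem_Collect_eq by linarith
  qed
  moreover have "sorted_wrt (<) (ls @ hs)"
    by (force simp: ls_def hs_def sorted_wrt_append sorted_wrt_map)
  then obtain f where f: "strict_mono f" "surj f" and "map f (as @ bs) = ls @ hs"
    using strict_mono_surj_extends_sorted[OF assms] by (force simp: ls_def hs_def)
  then have "map f as = ls" "map f bs = hs"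
    by (simp_all add: ls_def hs_def)
  ultimately show ?thesis
    using f by (metis set_map)
qed

lemma sorted_wrt_map_strict_mono_on:
  assumes "sorted_wrt (<) xs" and "strict_mono_on A f" and "set xs \<subseteq> A"
  shows "sorted_wrt (<) (map f xs)"
  using assms by (auto intro: sorted_wrt_map_mono dest: strict_mono_onD)

definition cyclically_sorted :: "'a::linorder list \<Rightarrow> bool" where
  "cyclically_sorted xs \<longleftrightarrow> (\<exists>ys k. sorted_wrt (<) ys \<and> xs = rotate k ys)"

lemma cyclically_sorted_rotate:
  "sorted_wrt (<) ys \<Longrightarrow> cyclically_sorted (rotate k ys)"
  unfolding cyclically_sorted_def by blast

lemma cyclically_sorted_pair:
  "p < q \<Longrightarrow> cyclically_sorted [p, q] \<and> cyclically_sorted [q, p]"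
  using cyclically_sorted_rotate[of "[p, q]" 0] cyclically_sorted_rotate[of "[p, q]" 1] by simp

lemma cyclically_sorted_triple:
  "p < q \<Longrightarrow> q < r \<Longrightarrow>
    cyclically_sorted [p, q, r] \<and> cyclically_sorted [q, r, p] \<and> cyclically_sorted [r, p, q]"
  using cyclically_sorted_rotate[of "[p, q, r]" 0] cyclically_sorted_rotate[of "[p, q, r]" 1]
    cyclically_sorted_rotate[of "[p, q, r]" 2]
  by (simp add: numeral_2_eq_2)

lemma cyclically_sorted_short_distinct:
  fixes xs :: "'a::linordered_ab_group_add list"
  assumes "distinct xs" and "length xs \<le> 3"
  shows "cyclically_sorted xs \<or> cyclically_sorted (map uminus xs)"
proof -
  have "xs = [] \<or> (\<exists>a. xs = [a]) \<or> (\<exists>a b. xs = [a, b]) \<or> (\<exists>a b c. xs = [a, b, c])"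
    using assms(2) by (auto simp: le_Suc_eq numeral_3_eq_3 numeral_2_eq_2 length_Suc_conv)
  moreover have "cyclically_sorted [a, b] \<or> cyclically_sorted [-a, -b]" if "a \<noteq> b" for a b :: 'a
    using that cyclically_sorted_pair[of a b] cyclically_sorted_pair[of b a] by (auto simp: neq_iff)
  moreover have "cyclically_sorted [a, b, c] \<or> cyclically_sorted [-a, -b, -c]"
    if distinct: "distinct [a, b, c]" for a b c :: 'a
  proof -
    consider "a < b" "b < c" | "b < c" "c < a" | "c < a" "a < b"
      | "c < b" "b < a" | "b < a" "a < c" | "a < c" "c < b"
      using distinct by (auto simp: neq_iff)
    then show ?thesis
      using cyclically_sorted_triple[of a b c] cyclically_sorted_triple[of b c a]
        cyclically_sorted_triple[of c a b] cyclically_sorted_triple[of "-a" "-b" "-c"]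
        cyclically_sorted_triple[of "-b" "-c" "-a"] cyclically_sorted_triple[of "-c" "-a" "-b"]
      by cases simp_all
  qed
  moreover have "cyclically_sorted ([] :: 'a list)" "cyclically_sorted [a]" for a :: 'a
    using cyclically_sorted_rotate[of "[]" 0] cyclically_sorted_rotate[of "[a]" 0] by simp_all
  ultimately show ?thesis
    using assms(1) by fastforce
qed

lemma rotate_add_mult_length: "rotate (k + length xs * l) xs = rotate k xs"
proof -
  have "(k + length xs * l) mod length xs = k mod length xs" by simp
  then show ?thesis
    by (simp only: rotate_conv_mod[of "k + length xs * l" xs] rotate_conv_mod[of k xs])
qed

locale cyc_closed =
  fixes \<Gamma> :: tstructure and e :: "rat \<Rightarrow> rat"
  assumes temporal: "temporal_language \<Gamma>"
    and witness: "cyc_witness e"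
    and preserves_cyc: "preserves (cyc e) \<Gamma>"
begin

lemma preserved_map_swapping_blocks:
  assumes "sorted_wrt (<) (as @ bs)" and "sorted_wrt (<) ys" and "length ys = length (as @ bs)"
  shows "\<exists>f. preserves f \<Gamma> \<and> map f (bs @ as) = ys"
proof -
  \<comment> \<open>Move as below pi and bs above pi; then cyc exchanges the two blocks.\<close>
  obtain f1 where f1: "strict_mono f1" "surj f1"
    and below: "f1 ` set as \<subseteq> below_pi" and above: "f1 ` set bs \<subseteq> above_pi"
    using automorphism_splitting_at_pi[OF assms(1)] by blast
  have "sorted_wrt (<) (map f1 as)" "sorted_wrt (<) (map f1 bs)"
    using assms(1) f1(1) by (auto simp: sorted_wrt_append sorted_wrt_map strict_mono_less)
  then have "sorted_wrt (<) (map (cyc e) (map f1 bs))" "sorted_wrt (<) (map (cyc e) (map f1 as))"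
    using sorted_wrt_map_strict_mono_on[OF _ strict_mono_on_cyc_above_pi[OF witness], of "map f1 bs"]
      sorted_wrt_map_strict_mono_on[OF _ strict_mono_on_cyc_below_pi[OF witness], of "map f1 as"]
      below above by simp_all
  moreover
  have "cyc e (f1 x) < cyc e (f1 y)" if "x \<in> set bs" "y \<in> set as" for x y
    using that below above cyc_above_pi(1)[OF witness] cyc_below_pi(2)[OF witness]
    by (blast intro: below_pi_less_above_pi)
  ultimately have "sorted_wrt (<) (map (cyc e \<circ> f1) (bs @ as))"
    by (auto simp: sorted_wrt_append)
  moreover have "length (map (cyc e \<circ> f1) (bs @ as)) = length ys"
    using assms(3) by simp
  ultimately obtain f2 where f2: "strict_mono f2" "surj f2" "map f2 (map (cyc e \<circ> f1) (bs @ as)) = ys"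
    using strict_mono_surj_extends_sorted[OF _ assms(2)] by blast
  have "preserves (f2 \<circ> cyc e \<circ> f1) \<Gamma>"
    using preserves_automorphism[OF temporal] f1 f2(1,2) preserves_cyc by (intro preserves_comp) auto
  moreover have "map (f2 \<circ> cyc e \<circ> f1) (bs @ as) = ys"
    using f2(3) by (simp add: comp_assoc)
  ultimately show ?thesis by blast
qed

lemma preserved_map_rotating_sorted:
  assumes "sorted_wrt (<) xs" and "sorted_wrt (<) ys" and "length xs = length ys"
  shows "\<exists>f. preserves f \<Gamma> \<and> map f (rotate k xs) = ys"
proof -
  define r where "r = k mod length xs"
  have "sorted_wrt (<) (take r xs @ drop r xs)" "length ys = length (take r xs @ drop r xs)"
    using assms by simp_all
  then have "\<exists>f. preserves f \<Gamma> \<and> map f (drop r xs @ take r xs) = ys"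
    by (rule preserved_map_swapping_blocks[OF _ assms(2)])
  then show ?thesis
    by (simp add: r_def rotate_drop_take)
qed

lemma preserved_map_between_cyclically_sorted:
  assumes "cyclically_sorted xs" and "cyclically_sorted ys" and "length xs = length ys"
  shows "\<exists>f. preserves f \<Gamma> \<and> map f xs = ys"
proof -
  obtain sx k where sx: "sorted_wrt (<) sx" "xs = rotate k sx"
    using assms(1) unfolding cyclically_sorted_def by blast
  obtain sy l where sy: "sorted_wrt (<) sy" "ys = rotate l sy"
    using assms(2) unfolding cyclically_sorted_def by blast
  \<comment> \<open>l + m is congruent to k modulo the length of sx.\<close>
  define m where "m = k + (length sx - 1) * l"
  have "rotate l (rotate m sx) = xs"
  proof (cases sx)
    case (Cons x xs')
    then have "l + m = k + length sx * l" by (simp add: m_def)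
    then show ?thesis
      using sx(2) by (simp add: rotate_rotate rotate_add_mult_length)
  qed (simp add: sx)
  moreover have "length sx = length sy"
    using assms(3) sx(2) sy(2) by simp
  then obtain f where "preserves f \<Gamma>" "map f (rotate m sx) = sy"
    using preserved_map_rotating_sorted[OF sx(1) sy(1)] by blast
  ultimately have "preserves f \<Gamma> \<and> map f xs = ys"
    using sy(2) by (auto simp flip: rotate_map)
  then show ?thesis by blast
qed

lemma preserved_bij_betw_pointed:
  assumes "finite T" and "finite B" and "card T = card B" and "v \<in> T" and "w \<in> B"
  shows "\<exists>f. preserves f \<Gamma> \<and> bij_betw f T B \<and> f v = w"
proof -
  define zs where "zs = sorted_list_of_set T"
  define ws where "ws = sorted_list_of_set B"
  have "v \<in> set zs" "w \<in> set ws"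
    using assms by (simp_all add: zs_def ws_def)
  then obtain p q where p: "p < length zs" "zs ! p = v" and q: "q < length ws" "ws ! q = w"
    by (meson in_set_conv_nth)
  have "cyclically_sorted (rotate p zs)" "cyclically_sorted (rotate q ws)"
    by (simp_all add: zs_def ws_def cyclically_sorted_rotate)
  moreover have "length (rotate p zs) = length (rotate q ws)"
    using assms(3) by (simp add: zs_def ws_def)
  ultimately obtain f where f: "preserves f \<Gamma>" "map f (rotate p zs) = rotate q ws"
    using preserved_map_between_cyclically_sorted by blast
  have "zs \<noteq> []" "ws \<noteq> []"
    using p q by auto
  then have "rotate p zs ! 0 = v" "rotate q ws ! 0 = w"
    using p q nth_rotate[of 0 zs p] nth_rotate[of 0 ws q] by simp_all
  then have "f v = w"
    using arg_cong[OF f(2), of "\<lambda>xs. xs ! 0"] \<open>zs \<noteq> []\<close> by simp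
  moreover have "bij_betw f T B"
  proof -
    have "distinct (map f (rotate p zs))" "set (map f (rotate p zs)) = B"
      unfolding f(2) using assms(2) by (simp_all add: ws_def)
    then show ?thesis
      using assms(1) by (simp add: bij_betw_def distinct_map zs_def)
  qed
  ultimately show ?thesis
    using f(1) by blast
qed

end

section \<open>Partial endomorphisms and their pp-definable images\<close>

definition partial_endo :: "tstructure \<Rightarrow> rat set \<Rightarrow> (rat \<Rightarrow> rat) \<Rightarrow> bool" where
  "partial_endo \<Gamma> X h \<longleftrightarrow> (\<forall>(n, R) \<in> set \<Gamma>. \<forall>u \<in> R. set u \<subseteq> X \<longrightarrow> map h u \<in> R)"

lemma preserves_imp_partial_endo: "preserves f \<Gamma> \<Longrightarrow> partial_endo \<Gamma> X f"
  unfolding preserves_def partial_endo_def by blast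

lemma partial_endo_id: "partial_endo \<Gamma> X id"
  unfolding partial_endo_def by simp

lemma partial_endoI:
  "(\<And>n R u. (n, R) \<in> set \<Gamma> \<Longrightarrow> u \<in> R \<Longrightarrow> set u \<subseteq> X \<Longrightarrow> map h u \<in> R) \<Longrightarrow> partial_endo \<Gamma> X h"
  unfolding partial_endo_def by blast

lemma partial_endoD:
  "partial_endo \<Gamma> X h \<Longrightarrow> (n, R) \<in> set \<Gamma> \<Longrightarrow> u \<in> R \<Longrightarrow> set u \<subseteq> X \<Longrightarrow> map h u \<in> R"
  unfolding partial_endo_def by blast

lemma partial_endo_comp:
  assumes "partial_endo \<Gamma> X h" and "partial_endo \<Gamma> (h ` X) g"
  shows "partial_endo \<Gamma> X (g \<circ> h)"
proof (rule partial_endoI)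
  fix n R u assume nR: "(n, R) \<in> set \<Gamma>" and "u \<in> R" and "set u \<subseteq> X"
  then have "map h u \<in> R"
    by (rule partial_endoD[OF assms(1)])
  moreover have "set (map h u) \<subseteq> h ` X"
    using \<open>set u \<subseteq> X\<close> by auto
  ultimately have "map g (map h u) \<in> R"
    using nR by (intro partial_endoD[OF assms(2)])
  then show "map (g \<circ> h) u \<in> R"
    by simp
qed

lemma partial_endo_subset: "partial_endo \<Gamma> X h \<Longrightarrow> Y \<subseteq> X \<Longrightarrow> partial_endo \<Gamma> Y h"
  by (meson order_trans partial_endoD partial_endoI)

lemma partial_endo_cong:
  assumes "partial_endo \<Gamma> X h" and "\<And>x. x \<in> X \<Longrightarrow> h x = h' x"
  shows "partial_endo \<Gamma> X h'"
proof (rule partial_endoI)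
  fix n R u assume "(n, R) \<in> set \<Gamma>" and "u \<in> R" and "set u \<subseteq> X"
  moreover from this have "map h u = map h' u"
    using assms(2) by (auto intro: map_cong)
  ultimately show "map h' u \<in> R"
    using partial_endoD[OF assms(1)] by metis
qed

lemma partial_endo_iff_nth:
  "partial_endo \<Gamma> X h \<longleftrightarrow>
    (\<forall>k u. k < length \<Gamma> \<longrightarrow> u \<in> snd (\<Gamma> ! k) \<longrightarrow> set u \<subseteq> X \<longrightarrow> map h u \<in> snd (\<Gamma> ! k))"
proof
  assume "partial_endo \<Gamma> X h"
  then show "\<forall>k u. k < length \<Gamma> \<longrightarrow> u \<in> snd (\<Gamma> ! k) \<longrightarrow> set u \<subseteq> X \<longrightarrow> map h u \<in> snd (\<Gamma> ! k)"
    by (metis nth_mem partial_endoD prod.collapse)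
next
  assume "\<forall>k u. k < length \<Gamma> \<longrightarrow> u \<in> snd (\<Gamma> ! k) \<longrightarrow> set u \<subseteq> X \<longrightarrow> map h u \<in> snd (\<Gamma> ! k)"
  then show "partial_endo \<Gamma> X h"
    by (intro partial_endoI) (metis in_set_conv_nth snd_conv)
qed

lemma pp_sat_foldr_PConj: "pp_sat \<Gamma> (foldr PConj \<phi>s PTrue) s \<longleftrightarrow> (\<forall>\<phi> \<in> set \<phi>s. pp_sat \<Gamma> \<phi> s)"
  by (induction \<phi>s) auto

lemma pp_sat_foldr_PExists:
  "pp_sat \<Gamma> (foldr PExists is \<phi>) s \<longleftrightarrow> (\<exists>s'. (\<forall>j. j \<notin> set is \<longrightarrow> s' j = s j) \<and> pp_sat \<Gamma> \<phi> s')"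
proof (induction "is" arbitrary: s)
  case Nil
  have "(\<forall>j. s' j = s j) \<longleftrightarrow> s' = s" for s' by auto
  then show ?case by simp
next
  case (Cons i "is")
  show ?case
  proof
    assume "pp_sat \<Gamma> (foldr PExists (i # is) \<phi>) s"
    then obtain a s' where "\<forall>j. j \<notin> set is \<longrightarrow> s' j = (s(i := a)) j" "pp_sat \<Gamma> \<phi> s'"
      using Cons.IH by auto
    then show "\<exists>s'. (\<forall>j. j \<notin> set (i # is) \<longrightarrow> s' j = s j) \<and> pp_sat \<Gamma> \<phi> s'"
      by (intro exI[of _ s']) auto
  next
    assume "\<exists>s'. (\<forall>j. j \<notin> set (i # is) \<longrightarrow> s' j = s j) \<and> pp_sat \<Gamma> \<phi> s'"
    then obtain s' where s': "\<forall>j. j \<notin> set (i # is) \<longrightarrow> s' j = s j" "pp_sat \<Gamma> \<phi> s'"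
      by blast
    then have "\<forall>j. j \<notin> set is \<longrightarrow> s' j = (s(i := s' i)) j"
      by auto
    then have "pp_sat \<Gamma> (foldr PExists is \<phi>) (s(i := s' i))"
      using Cons.IH s'(2) by blast
    then show "pp_sat \<Gamma> (foldr PExists (i # is) \<phi>) s"
      by auto
  qed
qed

lemma pp_defines_Int:
  "pp_defines \<Gamma> n R \<Longrightarrow> pp_defines \<Gamma> n R' \<Longrightarrow> pp_defines \<Gamma> n (R \<inter> R')"
proof -
  assume "pp_defines \<Gamma> n R" "pp_defines \<Gamma> n R'"
  then obtain \<phi> \<psi> where "\<And>s. pp_sat \<Gamma> \<phi> s \<longleftrightarrow> map s [0..<n] \<in> R"
    and "\<And>s. pp_sat \<Gamma> \<psi> s \<longleftrightarrow> map s [0..<n] \<in> R'"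
    unfolding pp_defines_def by blast
  then have "pp_sat \<Gamma> (PConj \<phi> \<psi>) s \<longleftrightarrow> map s [0..<n] \<in> R \<inter> R'" for s
    by simp
  then show ?thesis
    unfolding pp_defines_def by blast
qed

lemma pp_formula_for_partial_endo:
  fixes var :: "rat \<Rightarrow> nat"
  assumes "temporal_language \<Gamma>" and "finite X"
  shows "\<exists>\<psi>. \<forall>s. pp_sat \<Gamma> \<psi> s \<longleftrightarrow> partial_endo \<Gamma> X (s \<circ> var)"
proof -
  define At where "At = {(k, u). k < length \<Gamma> \<and> u \<in> snd (\<Gamma> ! k) \<and> set u \<subseteq> X}"
  have arity: "length u = fst (\<Gamma> ! k)" if "(k, u) \<in> At" for k u
  proof -
    have "(fst (\<Gamma> ! k), snd (\<Gamma> ! k)) \<in> set \<Gamma>" "u \<in> snd (\<Gamma> ! k)"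
      using that by (simp_all add: At_def)
    then show ?thesis
      by (rule temporal_language_arity[OF assms(1)])
  qed
  have "At \<subseteq> (\<Union>k < length \<Gamma>. {k} \<times> {u. set u \<subseteq> X \<and> length u = fst (\<Gamma> ! k)})"
    using arity by (auto simp: At_def)
  moreover have "finite (\<Union>k < length \<Gamma>. {k} \<times> {u. set u \<subseteq> X \<and> length u = fst (\<Gamma> ! k)})"
    using assms(2) by (intro finite_UN_I finite_cartesian_product finite_lists_length_eq) auto
  ultimately obtain al where al: "set al = At"
    using finite_list finite_subset by blast
  define \<psi> where "\<psi> = foldr PConj (map (\<lambda>(k, u). PAtom k (map var u)) al) PTrue"
  have "pp_sat \<Gamma> \<psi> s \<longleftrightarrow> partial_endo \<Gamma> X (s \<circ> var)" for s
  proof -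
    have "pp_sat \<Gamma> \<psi> s \<longleftrightarrow> (\<forall>(k, u) \<in> At. pp_sat \<Gamma> (PAtom k (map var u)) s)"
      by (simp add: \<psi>_def pp_sat_foldr_PConj al case_prod_unfold)
    also have "\<dots> \<longleftrightarrow> (\<forall>(k, u) \<in> At. map (s \<circ> var) u \<in> snd (\<Gamma> ! k))"
      using arity by (auto simp: At_def)
    also have "\<dots> \<longleftrightarrow> partial_endo \<Gamma> X (s \<circ> var)"
      by (auto simp: partial_endo_iff_nth At_def)
    finally show ?thesis .
  qed
  then show ?thesis
    by blast
qed

lemma index_function_of_distinct:
  assumes "distinct xs"
  obtains idx where "\<And>i. i < length xs \<Longrightarrow> idx (xs ! i) = i"
proof
  show "the_inv_into {..<length xs} ((!) xs) (xs ! i) = i" if "i < length xs" for i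
    using assms that by (simp add: the_inv_into_f_f inj_on_nth)
qed

lemma pp_defines_partial_endo_images:
  assumes "temporal_language \<Gamma>" and "finite X" and "distinct vs" and "set vs \<subseteq> X"
  shows "pp_defines \<Gamma> (length vs) {map h vs | h. partial_endo \<Gamma> X h}"
proof -
  obtain rs where rs: "set rs = X - set vs" "distinct rs"
    using finite_distinct_list[of "X - set vs"] assms(2) by blast
  define xs where "xs = vs @ rs"
  define n where "n = length vs"
  define m where "m = length xs"
  have "distinct xs" "set xs = X"
    using rs assms(3,4) by (auto simp: xs_def)
  obtain idx where idx_nth: "\<And>i. i < m \<Longrightarrow> idx (xs ! i) = i"
    using index_function_of_distinct[OF \<open>distinct xs\<close>] unfolding m_def by blast
  have nth_idx: "idx x < m" "xs ! idx x = x" if "x \<in> X" for x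
    using that \<open>set xs = X\<close> idx_nth by (auto simp: in_set_conv_nth m_def)
  obtain \<psi> where \<psi>: "\<And>s. pp_sat \<Gamma> \<psi> s \<longleftrightarrow> partial_endo \<Gamma> X (s \<circ> idx)"
    using pp_formula_for_partial_endo[OF assms(1,2)] by blast
  \<comment> \<open>Variable i stands for xs ! i; those not naming an entry of vs are quantified.\<close>
  have "pp_sat \<Gamma> (foldr PExists [n..<m] \<psi>) s \<longleftrightarrow> map s [0..<n] \<in> {map h vs | h. partial_endo \<Gamma> X h}"
    for s
  proof
    assume "pp_sat \<Gamma> (foldr PExists [n..<m] \<psi>) s"
    then obtain s' where s': "\<And>j. j \<notin> set [n..<m] \<Longrightarrow> s' j = s j" "partial_endo \<Gamma> X (s' \<circ> idx)"
      unfolding pp_sat_foldr_PExists \<psi> by blast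
    have "map (s' \<circ> idx) vs = map s [0..<n]"
    proof (rule nth_equalityI)
      fix i assume "i < length (map (s' \<circ> idx) vs)"
      then have "i < n" "i < m" by (simp_all add: n_def m_def xs_def)
      then show "map (s' \<circ> idx) vs ! i = map s [0..<n] ! i"
        using idx_nth[of i] s'(1)[of i] by (simp add: xs_def nth_append n_def)
    qed (simp add: n_def)
    then show "map s [0..<n] \<in> {map h vs | h. partial_endo \<Gamma> X h}"
      using s'(2) by (intro CollectI exI[of _ "s' \<circ> idx"]) simp
  next
    assume "map s [0..<n] \<in> {map h vs | h. partial_endo \<Gamma> X h}"
    then obtain h where h: "partial_endo \<Gamma> X h" "map h vs = map s [0..<n]"
      by auto
    define s' where "s' j = (if j \<in> {n..<m} then h (xs ! j) else s j)" for j
    have "h x = (s' \<circ> idx) x" if "x \<in> X" for x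
    proof (cases "idx x < n")
      case True
      have "vs ! idx x = x"
        using True nth_idx[OF that] by (simp add: xs_def nth_append n_def)
      moreover have "map h vs ! idx x = map s [0..<n] ! idx x"
        using h(2) by simp
      ultimately show ?thesis
        using True by (simp add: s'_def n_def)
    next
      case False
      then show ?thesis
        using nth_idx[OF that] by (simp add: s'_def)
    qed
    then have "partial_endo \<Gamma> X (s' \<circ> idx)"
      using partial_endo_cong[OF h(1)] by blast
    moreover have "\<forall>j. j \<notin> set [n..<m] \<longrightarrow> s' j = s j"
      by (simp add: s'_def)
    ultimately show "pp_sat \<Gamma> (foldr PExists [n..<m] \<psi>) s"
      unfolding pp_sat_foldr_PExists \<psi> by blast
  qed
  then show ?thesis
    unfolding pp_defines_def n_def by blast
qed

lemma image_rotate_map_Collect: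
  "{map h (rotate k vs) | h. P h} = rotate k ` {map h vs | h. P h}"
proof
  show "{map h (rotate k vs) | h. P h} \<subseteq> rotate k ` {map h vs | h. P h}"
    by (auto simp flip: rotate_map)
  show "rotate k ` {map h vs | h. P h} \<subseteq> {map h (rotate k vs) | h. P h}"
    by (auto simp: rotate_map)
qed

lemma S_rel_eq_Int_rotations:
  fixes R :: "rat list set"
  assumes length_R: "\<And>t. t \<in> R \<Longrightarrow> length t = 3"
    and const: "\<And>x. [x, x, x] \<in> R"
    and distinct: "\<And>x y z. distinct [x, y, z] \<Longrightarrow> [x, y, z] \<in> R"
    and collapse: "\<And>x z. [x, x, z] \<in> R \<Longrightarrow> x = z"
  shows "S_rel = R \<inter> rotate 1 ` R \<inter> rotate 2 ` R"
proof -
  have triple: "\<exists>x y z. t = [x, y, z]" if "length t = 3" for t :: "rat list"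
    using that by (auto simp: numeral_3_eq_3 length_Suc_conv)
  have rotate1: "[x, y, z] \<in> rotate 1 ` R \<longleftrightarrow> [z, x, y] \<in> R" for x y z
  proof
    assume "[x, y, z] \<in> rotate 1 ` R"
    then obtain t where "[x, y, z] = rotate 1 t" "t \<in> R" by (rule imageE)
    with triple[OF length_R] show "[z, x, y] \<in> R" by force
  next
    assume "[z, x, y] \<in> R"
    then show "[x, y, z] \<in> rotate 1 ` R" by (intro image_eqI[of _ _ "[z, x, y]"]) simp_all
  qed
  have rotate2: "[x, y, z] \<in> rotate 2 ` R \<longleftrightarrow> [y, z, x] \<in> R" for x y z
  proof
    assume "[x, y, z] \<in> rotate 2 ` R"
    then obtain t where "[x, y, z] = rotate 2 t" "t \<in> R" by (rule imageE)
    with triple[OF length_R] show "[y, z, x] \<in> R" by (force simp: numeral_2_eq_2)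
  next
    assume "[y, z, x] \<in> R"
    then show "[x, y, z] \<in> rotate 2 ` R" by (intro image_eqI[of _ _ "[y, z, x]"]) (simp_all add: numeral_2_eq_2)
  qed
  have S: "[x, y, z] \<in> S_rel \<longleftrightarrow> [x, y, z] \<in> R \<and> [z, x, y] \<in> R \<and> [y, z, x] \<in> R" for x y z
  proof (cases "distinct [x, y, z]")
    case True
    then show ?thesis using distinct[of x y z] distinct[of z x y] distinct[of y z x]
      by (auto simp: S_rel_def)
  next
    case False
    then consider "x = y" | "y = z" | "x = z" by auto
    then show ?thesis
      using const collapse[of x z] collapse[of y x] collapse[of z y] by cases (auto simp: S_rel_def)
  qed
  show ?thesis
  proof (rule set_eqI)
    fix t
    show "t \<in> S_rel \<longleftrightarrow> t \<in> R \<inter> rotate 1 ` R \<inter> rotate 2 ` R"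
    proof (cases "length t = 3")
      case True
      then obtain x y z where "t = [x, y, z]"
        using triple by blast
      then show ?thesis
        using S rotate1 rotate2 by simp
    next
      case False
      then show ?thesis
        using length_R by (auto simp: S_rel_def)
    qed
  qed
qed

section \<open>Collapsing partial endomorphisms and peak\<close>

locale cyc_minus_const_closed = cyc_closed +
  assumes preserves_uminus: "preserves uminus \<Gamma>"
    and preserves_some_const: "\<exists>c. preserves (\<lambda>_. c) \<Gamma>"
begin

lemma preserves_consts: "preserves (\<lambda>_. a) \<Gamma>"
  using preserves_some_const preserves_all_consts[OF temporal] by blast

lemma preserved_involution_cyclically_sorting:
  assumes "distinct xs" and "length xs \<le> 3"
  shows "\<exists>\<sigma>. preserves \<sigma> \<Gamma> \<and> \<sigma> \<circ> \<sigma> = id \<and> cyclically_sorted (map \<sigma> xs)"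
proof (cases "cyclically_sorted xs")
  case True
  then show ?thesis
    using preserves_id by (intro exI[of _ id]) simp
next
  case False
  then have "cyclically_sorted (map uminus xs)"
    using cyclically_sorted_short_distinct[OF assms] by blast
  then show ?thesis
    using preserves_uminus by (intro exI[of _ uminus]) (simp add: fun_eq_iff)
qed

lemma preserved_map_between_short_distinct:
  assumes "distinct xs" and "distinct ys" and "length xs = length ys" and "length xs \<le> 3"
  shows "\<exists>f. preserves f \<Gamma> \<and> map f xs = ys"
proof -
  obtain \<sigma> \<tau> where \<sigma>: "preserves \<sigma> \<Gamma>" "cyclically_sorted (map \<sigma> xs)"
    and \<tau>: "preserves \<tau> \<Gamma>" "\<tau> \<circ> \<tau> = id" "cyclically_sorted (map \<tau> ys)"
    using preserved_involution_cyclically_sorting assms by metis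
  then obtain f where f: "preserves f \<Gamma>" "map f (map \<sigma> xs) = map \<tau> ys"
    using preserved_map_between_cyclically_sorted assms(3) by (metis length_map)
  have "preserves (\<tau> \<circ> f \<circ> \<sigma>) \<Gamma>"
    using \<sigma>(1) \<tau>(1) f(1) by (intro preserves_comp)
  moreover have "map (\<tau> \<circ> f \<circ> \<sigma>) xs = ys"
    using arg_cong[OF f(2), of "map \<tau>"] \<tau>(2) by (simp add: comp_assoc)
  ultimately show ?thesis
    by blast
qed

context
  assumes no_S: "\<not> pp_defines \<Gamma> 3 S_rel"
begin

lemma partial_endo_identifying_two_of_three:
  assumes "finite X" and "set [a, b, c] \<subseteq> X" and "distinct [a, b, c]"
  shows "\<exists>h. partial_endo \<Gamma> X h \<and> h a = h b \<and> h a \<noteq> h c"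
proof (rule ccontr)
  assume none: "\<not> ?thesis"
  define R where "R = {map h [a, b, c] | h. partial_endo \<Gamma> X h}"
  have S_rel: "S_rel = R \<inter> rotate 1 ` R \<inter> rotate 2 ` R"
  proof (rule S_rel_eq_Int_rotations)
    show "length t = 3" if "t \<in> R" for t
      using that by (auto simp: R_def)
    show "[x, x, x] \<in> R" for x
      using preserves_imp_partial_endo[OF preserves_consts[of x]] by (auto simp: R_def)
    show "[x, y, z] \<in> R" if xyz: "distinct [x, y, z]" for x y z
    proof -
      obtain f where "preserves f \<Gamma>" "map f [a, b, c] = [x, y, z]"
        using preserved_map_between_short_distinct[OF assms(3) xyz] by auto
      then show ?thesis
        unfolding R_def using preserves_imp_partial_endo by (intro CollectI exI[of _ f]) simp
    qed
    show "x = z" if xxz: "[x, x, z] \<in> R" for x z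
    proof -
      have "\<exists>h. partial_endo \<Gamma> X h \<and> h a = x \<and> h b = x \<and> h c = z"
        using xxz by (auto simp: R_def)
      then obtain h where h: "partial_endo \<Gamma> X h" "h a = x" "h b = x" "h c = z"
        by blast
      show ?thesis
      proof (rule ccontr)
        assume "x \<noteq> z"
        with h have "partial_endo \<Gamma> X h \<and> h a = h b \<and> h a \<noteq> h c"
          by simp
        with none show False
          by blast
      qed
    qed
  qed
  have rotations: "pp_defines \<Gamma> 3 (rotate k ` R)" for k
  proof -
    have "distinct (rotate k [a, b, c])" "set (rotate k [a, b, c]) \<subseteq> X"
      using assms(2,3) by (simp_all only: distinct_rotate set_rotate)
    then have "pp_defines \<Gamma> (length (rotate k [a, b, c]))
        {map h (rotate k [a, b, c]) | h. partial_endo \<Gamma> X h}"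
      by (rule pp_defines_partial_endo_images[OF temporal assms(1)])
    moreover have "length (rotate k [a, b, c]) = 3"
      by simp
    ultimately have "pp_defines \<Gamma> 3 {map h (rotate k [a, b, c]) | h. partial_endo \<Gamma> X h}"
      by (simp only:)
    then show ?thesis
      unfolding R_def image_rotate_map_Collect .
  qed
  have "pp_defines \<Gamma> 3 R"
    using rotations[of 0] by simp
  then have "pp_defines \<Gamma> 3 S_rel"
    unfolding S_rel by (intro pp_defines_Int rotations)
  with no_S show False ..
qed

lemma partial_endo_onto_two_points:
  "finite X \<Longrightarrow> 2 \<le> card X \<Longrightarrow> \<exists>g. partial_endo \<Gamma> X g \<and> card (g ` X) = 2"
proof (induction "card X" arbitrary: X rule: less_induct)
  case less
  show ?case
  proof (cases "card X = 2")
    case True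
    then show ?thesis
      using partial_endo_id by (intro exI[of _ id]) simp
  next
    case False
    then have "3 \<le> card X"
      using less.prems(2) by simp
    then obtain S where "S \<subseteq> X" "card S = 3"
      by (rule obtain_subset_with_card_n)
    then obtain a b c where abc: "set [a, b, c] \<subseteq> X" "distinct [a, b, c]"
      by (auto simp: card_3_iff)
    obtain h where h: "partial_endo \<Gamma> X h" "h a = h b" "h a \<noteq> h c"
      using partial_endo_identifying_two_of_three[OF less.prems(1) abc] by blast
    have "\<not> inj_on h X"
      using h(2) abc by (auto dest: inj_onD)
    then have smaller: "card (h ` X) < card X"
      using less.prems(1) card_image_le inj_on_iff_eq_card le_neq_implies_less by blast
    have "{h a, h c} \<subseteq> h ` X"
      using abc by auto
    then have "2 \<le> card (h ` X)"
      using h(3) less.prems(1) card_mono[of "h ` X" "{h a, h c}"] by simp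
    then obtain g where g: "partial_endo \<Gamma> (h ` X) g" "card (g ` h ` X) = 2"
      using less.hyps[OF smaller] less.prems(1) by blast
    have "partial_endo \<Gamma> X (g \<circ> h)"
      using partial_endo_comp[OF h(1) g(1)] .
    moreover have "card ((g \<circ> h) ` X) = 2"
      using g(2) by (simp add: image_comp)
    ultimately show ?thesis
      by blast
  qed
qed

lemma partial_endo_with_large_fibre:
  "\<exists>B w g p. finite B \<and> card B = Suc k \<and> w \<in> B \<and> partial_endo \<Gamma> B g
     \<and> (\<forall>x \<in> B - {w}. g x = p) \<and> g w \<noteq> p"
proof -
  obtain X :: "rat set" where X: "finite X" "card X = 2 * k + 2"
    using infinite_arbitrarily_large[OF infinite_UNIV_char_0] by blast
  moreover have "2 \<le> card X"
    using X(2) by simp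
  ultimately obtain g where g: "partial_endo \<Gamma> X g" "card (g ` X) = 2"
    using partial_endo_onto_two_points by blast
  define fibre where "fibre y = {x \<in> X. g x = y}" for y
  obtain p q where pq: "g ` X = {p, q}" "p \<noteq> q" "card (fibre q) \<le> card (fibre p)"
  proof -
    obtain p q where "g ` X = {p, q}" "p \<noteq> q"
      using g(2) by (auto simp: card_2_iff)
    then show thesis
      using that[of p q] that[of q p] by (cases "card (fibre q) \<le> card (fibre p)") auto
  qed
  have "X = fibre p \<union> fibre q" "fibre p \<inter> fibre q = {}"
    using pq(1,2) by (auto simp: fibre_def)
  then have "card X = card (fibre p) + card (fibre q)"
    using X(1) card_Un_disjoint[of "fibre p" "fibre q"] by (simp add: fibre_def)
  then have "k \<le> card (fibre p)"
    using X(2) pq(3) by linarith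
  then obtain K where K: "K \<subseteq> fibre p" "card K = k"
    by (rule obtain_subset_with_card_n)
  obtain w where w: "w \<in> X" "g w = q"
    using pq(1) by (metis imageE insertCI)
  define B where "B = insert w K"
  have "w \<notin> K" "finite K"
    using K(1) w(2) pq(2) X(1) by (auto simp: fibre_def intro: finite_subset)
  then have "finite B" "card B = Suc k"
    using K(2) by (simp_all add: B_def)
  moreover have "B \<subseteq> X"
    using K(1) w(1) by (auto simp: B_def fibre_def)
  then have "partial_endo \<Gamma> B g"
    by (rule partial_endo_subset[OF g(1)])
  moreover have "\<forall>x \<in> B - {w}. g x = p"
    using K(1) by (auto simp: B_def fibre_def)
  ultimately show ?thesis
    using w(2) pq(2) by (intro exI[of _ B] exI[of _ w] exI[of _ g] exI[of _ p]) (simp add: B_def)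
qed

lemma preserves_peak: "preserves peak \<Gamma>"
  unfolding preserves_def
proof clarify
  fix n R t assume "(n, R) \<in> set \<Gamma>" "t \<in> R"
  define T where "T = insert 0 (set t)"
  have "card T = Suc (card T - 1)"
    by (simp add: T_def card_gt_0_iff)
  then obtain B w g p where B: "finite B" "card B = card T" "w \<in> B" and g: "partial_endo \<Gamma> B g"
    and fibre: "\<forall>x \<in> B - {w}. g x = p" and "g w \<noteq> p"
    using partial_endo_with_large_fibre[of "card T - 1"] by metis
  obtain f where f: "preserves f \<Gamma>" "bij_betw f T B" "f 0 = w"
    using preserved_bij_betw_pointed[of T B 0 w] B by (auto simp: T_def)
  obtain \<sigma> where \<sigma>: "preserves \<sigma> \<Gamma>" "map \<sigma> [p, g w] = [-1, 1]"
    using preserved_map_between_short_distinct[of "[p, g w]" "[-1, 1]"] \<open>g w \<noteq> p\<close> by auto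
  have "map f t \<in> R"
    using f(1) \<open>(n, R) \<in> set \<Gamma>\<close> \<open>t \<in> R\<close> unfolding preserves_def by blast
  moreover have "set (map f t) \<subseteq> B"
    using f(2) by (auto simp: T_def bij_betw_def)
  ultimately have "map g (map f t) \<in> R"
    using \<open>(n, R) \<in> set \<Gamma>\<close> by (intro partial_endoD[OF g])
  then have image: "map \<sigma> (map g (map f t)) \<in> R"
    using \<sigma>(1) \<open>(n, R) \<in> set \<Gamma>\<close> unfolding preserves_def by blast
  have "\<sigma> (g (f y)) = peak y" if "y \<in> set t" for y
  proof (cases "y = 0")
    case False
    have "y \<in> T" "0 \<in> T"
      using that by (simp_all add: T_def)
    then have "f y \<in> B" "f y \<noteq> f 0"
      using f(2) False by (auto simp: bij_betw_def inj_on_eq_iff)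
    then have "f y \<in> B - {w}"
      using f(3) by simp
    then show ?thesis
      using fibre \<sigma>(2) False by (simp add: peak_def)
  qed (use f(3) \<sigma>(2) in \<open>simp add: peak_def\<close>)
  then have "map \<sigma> (map g (map f t)) = map peak t"
    by simp
  with image show "map peak t \<in> R"
    by (simp only:)
qed

end

end

theorem lemma4p10:
  fixes \<Gamma> :: tstructure and e :: "rat \<Rightarrow> rat"
  assumes "temporal_language \<Gamma>"
    and "\<exists>c. preserves (\<lambda>_. c) \<Gamma>"
    and "preserves uminus \<Gamma>"
    and "cyc_witness e"
    and "preserves (cyc e) \<Gamma>"
    and "\<not> pp_defines \<Gamma> 3 S_rel"
  shows "preserves su1 \<Gamma> \<or> preserves peak \<Gamma> \<or> preserves ci \<Gamma> \<or> preserves ic \<Gamma>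
         \<or> (\<forall>f. bij f \<longrightarrow> preserves f \<Gamma>)"
proof -
  interpret cyc_minus_const_closed \<Gamma> e
    using assms(1-5) by unfold_locales
  have "preserves peak \<Gamma>"
    using preserves_peak[OF assms(6)] .
  then show ?thesis
    by blast
qed

end
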